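(* Let $A$ be a unitarizable Hopf $*$-algebra and $Z$ an $A$-$*$-Galois extension. Any positive Haar measure on $Z$ is faithful, i.e. $\mu(z^*z)>0$ for all $z\neq 0$.
   Context: Base field $\mathbb C$. A Hopf $*$-algebra is a Hopf algebra that is a $*$-algebra with $\Delta$ a $*$-homomorphism; it is unitarizable if every finite-dimensional right comodule $V$ admits a scalar product $\phi_V:\overline V\otimes V\to\mathbb C$ which is a comodule map ($\overline V$ the conjugate comodule, $\overline v\mapsto\sum\overline{v_i}\otimes a_i^*$ if $\alpha_V(v)=\sum v_i\otimes a_i$). An $A$-$*$-Galois extension is a nonzero $*$-algebra $Z$ with a left coaction $\alpha_Z:Z\to A\otimes Z$ that is a $*$-homomorphism and with $(1_A\otimes m_Z)(\alpha_Z\otimes1_Z):Z\otimes Z\to A\otimes Z$ bijective. A Haar measure on $Z$ is a linear $\mu:Z\to\mathbb C$ with $(1_A\otimes\mu)\alpha_Z=\mu(\cdot)1_A$ and $\mu(1)=1$; positive if $\mu(z^*z)\ge0$ for all $z$. *)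

theory Defs
  imports Complex_Main "HOL-Library.Complex_Order"
begin

class cvec = ab_group_add +
  fixes cscale :: "complex \<Rightarrow> 'a \<Rightarrow> 'a"
  assumes cscale_add_right: "cscale a (x + y) = cscale a x + cscale a y"
    and cscale_add_left: "cscale (a + b) x = cscale a x + cscale b x"
    and cscale_cscale: "cscale a (cscale b x) = cscale (a * b) x"
    and cscale_one: "cscale 1 x = x"

class calg = cvec + ring_1 +
  assumes cscale_mult_left: "cscale a x * y = cscale a (x * y)"
    and cscale_mult_right: "x * cscale a y = cscale a (x * y)"

class cstar_alg = calg +
  fixes cstar :: "'a \<Rightarrow> 'a"
  assumes cstar_cstar: "cstar (cstar x) = x"
    and cstar_add: "cstar (x + y) = cstar x + cstar y"
    and cstar_cscale: "cstar (cscale a x) = cscale (cnj a) (cstar x)"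
    and cstar_mult: "cstar (x * y) = cstar y * cstar x"

instantiation complex :: cstar_alg
begin
definition cscale_complex :: "complex \<Rightarrow> complex \<Rightarrow> complex" where
  "cscale_complex a x = a * x"
definition cstar_complex :: "complex \<Rightarrow> complex" where
  "cstar_complex x = cnj x"
instance
  by standard (auto simp: cscale_complex_def cstar_complex_def algebra_simps)
end

definition clinear :: "('a::cvec \<Rightarrow> 'b::cvec) \<Rightarrow> bool" where
  "clinear f \<longleftrightarrow> (\<forall>x y. f (x + y) = f x + f y) \<and> (\<forall>c x. f (cscale c x) = cscale c (f x))"

definition cindep :: "nat \<Rightarrow> (nat \<Rightarrow> 'a::cvec) \<Rightarrow> bool" where
  "cindep n v \<longleftrightarrow> (\<forall>c. (\<Sum>i<n. cscale (c i) (v i)) = 0 \<longrightarrow> (\<forall>i<n. c i = 0))"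

text \<open>t : X \<times> Y \<rightarrow> T exhibits T as the algebraic tensor product of X and Y:
  t is bilinear, its image spans T, and a sum of t (x i) (y i) with linearly
  independent y i vanishes only if all x i vanish.\<close>
definition is_tensor :: "('a::cvec \<Rightarrow> 'b::cvec \<Rightarrow> 'c::cvec) \<Rightarrow> bool" where
  "is_tensor t \<longleftrightarrow>
     (\<forall>y. clinear (\<lambda>x. t x y)) \<and> (\<forall>x. clinear (t x)) \<and>
     (\<forall>w. \<exists>(n::nat) x y. w = (\<Sum>i<n. t (x i) (y i))) \<and>
     (\<forall>(n::nat) x y. cindep n y \<and> (\<Sum>i<n. t (x i) (y i)) = 0 \<longrightarrow> (\<forall>i<n. x i = 0))"

definition lin_ext :: "('a \<Rightarrow> 'b \<Rightarrow> 'c::cvec) \<Rightarrow> ('a \<Rightarrow> 'b \<Rightarrow> 'd::cvec) \<Rightarrow> ('c \<Rightarrow> 'd) \<Rightarrow> bool" where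
  "lin_ext t f h \<longleftrightarrow> clinear h \<and> (\<forall>x y. h (t x y) = f x y)"

definition tensor_algebra :: "('a::cstar_alg \<Rightarrow> 'b::cstar_alg \<Rightarrow> 'c::cstar_alg) \<Rightarrow> bool" where
  "tensor_algebra t \<longleftrightarrow> is_tensor t \<and> t 1 1 = 1 \<and>
     (\<forall>a b c d. t a b * t c d = t (a * c) (b * d)) \<and>
     (\<forall>a b. cstar (t a b) = t (cstar a) (cstar b))"

definition star_hom :: "('a::cstar_alg \<Rightarrow> 'b::cstar_alg) \<Rightarrow> bool" where
  "star_hom f \<longleftrightarrow> clinear f \<and> f 1 = 1 \<and> (\<forall>x y. f (x * y) = f x * f y) \<and>
     (\<forall>x. f (cstar x) = cstar (f x))"

text \<open>tAA : A \<times> A \<rightarrow> A\<otimes>A, tAAA : (A\<otimes>A) \<times> A \<rightarrow> (A\<otimes>A)\<otimes>A; D comultiplication,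
  e counit, S antipode.\<close>
definition hopf_star_algebra ::
  "('a::cstar_alg \<Rightarrow> 'a \<Rightarrow> 'aa::cstar_alg) \<Rightarrow> ('aa \<Rightarrow> 'a \<Rightarrow> 'aaa::cvec) \<Rightarrow>
   ('a \<Rightarrow> 'aa) \<Rightarrow> ('a \<Rightarrow> complex) \<Rightarrow> ('a \<Rightarrow> 'a) \<Rightarrow> bool" where
  "hopf_star_algebra tAA tAAA D e S \<longleftrightarrow>
     tensor_algebra tAA \<and> is_tensor tAAA \<and>
     star_hom D \<and>
     clinear e \<and> e 1 = 1 \<and> (\<forall>x y. e (x * y) = e x * e y) \<and>
     clinear S \<and>
     (\<forall>D1 D2 L. lin_ext tAA (\<lambda>x y. tAAA (D x) y) D1 \<and>
                (\<forall>x. lin_ext tAA (\<lambda>p q. tAAA (tAA x p) q) (L x)) \<and>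
                lin_ext tAA (\<lambda>x y. L x (D y)) D2
                \<longrightarrow> (\<forall>a. D1 (D a) = D2 (D a))) \<and>
     (\<forall>h. lin_ext tAA (\<lambda>x y. cscale (e x) y) h \<longrightarrow> (\<forall>a. h (D a) = a)) \<and>
     (\<forall>h. lin_ext tAA (\<lambda>x y. cscale (e y) x) h \<longrightarrow> (\<forall>a. h (D a) = a)) \<and>
     (\<forall>h. lin_ext tAA (\<lambda>x y. S x * y) h \<longrightarrow> (\<forall>a. h (D a) = cscale (e a) 1)) \<and>
     (\<forall>h. lin_ext tAA (\<lambda>x y. x * S y) h \<longrightarrow> (\<forall>a. h (D a) = cscale (e a) 1))"

text \<open>A right comodule structure on C^n, written in the standard basis:
  e_j \<mapsto> \<Sum>i. e_i \<otimes> u i j.  Every finite-dimensional right comodule is of this form.\<close>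
definition right_corep ::
  "('a::cstar_alg \<Rightarrow> 'a \<Rightarrow> 'aa::cstar_alg) \<Rightarrow> ('a \<Rightarrow> 'aa) \<Rightarrow> ('a \<Rightarrow> complex) \<Rightarrow>
   nat \<Rightarrow> (nat \<Rightarrow> nat \<Rightarrow> 'a) \<Rightarrow> bool" where
  "right_corep tAA D e n u \<longleftrightarrow>
     (\<forall>k<n. \<forall>j<n. D (u k j) = (\<Sum>i<n. tAA (u k i) (u i j))) \<and>
     (\<forall>i<n. \<forall>j<n. e (u i j) = (if i = j then 1 else 0))"

text \<open>F k l = phi(conj(e_k) \<otimes> e_l): phi is a scalar product (Hermitian, positive definite)
  and a comodule map conj(V) \<otimes> V \<rightarrow> C.\<close>
definition invariant_scalar_product :: "nat \<Rightarrow> (nat \<Rightarrow> nat \<Rightarrow> 'a::cstar_alg) \<Rightarrow> (nat \<Rightarrow> nat \<Rightarrow> complex) \<Rightarrow> bool" where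
  "invariant_scalar_product n u F \<longleftrightarrow>
     (\<forall>k<n. \<forall>l<n. F l k = cnj (F k l)) \<and>
     (\<forall>c. (\<exists>i<n. c i \<noteq> 0) \<longrightarrow> 0 < (\<Sum>k<n. \<Sum>l<n. cnj (c k) * F k l * c l)) \<and>
     (\<forall>k<n. \<forall>l<n. (\<Sum>i<n. \<Sum>j<n. cscale (F i j) (cstar (u i k) * u j l)) = cscale (F k l) 1)"

definition unitarizable ::
  "('a::cstar_alg \<Rightarrow> 'a \<Rightarrow> 'aa::cstar_alg) \<Rightarrow> ('a \<Rightarrow> 'aa) \<Rightarrow> ('a \<Rightarrow> complex) \<Rightarrow> bool" where
  "unitarizable tAA D e \<longleftrightarrow>
     (\<forall>n u. right_corep tAA D e n u \<longrightarrow> (\<exists>F. invariant_scalar_product n u F))"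

text \<open>tAZ : A \<times> Z \<rightarrow> A\<otimes>Z, tAAZ : (A\<otimes>A) \<times> Z \<rightarrow> (A\<otimes>A)\<otimes>Z, tZZ : Z \<times> Z \<rightarrow> Z\<otimes>Z,
  al the left coaction.  Z is nonzero since cstar_alg includes 0 \<noteq> 1.\<close>
definition galois_ext ::
  "('a::cstar_alg \<Rightarrow> 'a \<Rightarrow> 'aa::cstar_alg) \<Rightarrow> ('a \<Rightarrow> 'aa) \<Rightarrow> ('a \<Rightarrow> complex) \<Rightarrow>
   ('a \<Rightarrow> 'z::cstar_alg \<Rightarrow> 'az::cstar_alg) \<Rightarrow> ('aa \<Rightarrow> 'z \<Rightarrow> 'aaz::cvec) \<Rightarrow>
   ('z \<Rightarrow> 'z \<Rightarrow> 'zz::cvec) \<Rightarrow> ('z \<Rightarrow> 'az) \<Rightarrow> bool" where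
  "galois_ext tAA D e tAZ tAAZ tZZ al \<longleftrightarrow>
     tensor_algebra tAZ \<and> is_tensor tAAZ \<and> is_tensor tZZ \<and>
     star_hom al \<and>
     (\<forall>D1 D2 M. lin_ext tAZ (\<lambda>a z. tAAZ (D a) z) D1 \<and>
                (\<forall>a. lin_ext tAZ (\<lambda>b w. tAAZ (tAA a b) w) (M a)) \<and>
                lin_ext tAZ (\<lambda>a z. M a (al z)) D2
                \<longrightarrow> (\<forall>z. D1 (al z) = D2 (al z))) \<and>
     (\<forall>h. lin_ext tAZ (\<lambda>a z. cscale (e a) z) h \<longrightarrow> (\<forall>z. h (al z) = z)) \<and>
     (\<exists>beta R. (\<forall>w. lin_ext tAZ (\<lambda>a z. tAZ a (z * w)) (R w)) \<and>
               lin_ext tZZ (\<lambda>z w. R w (al z)) beta \<and> bij beta)"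

definition haar_measure ::
  "('a::cstar_alg \<Rightarrow> 'z::cstar_alg \<Rightarrow> 'az::cstar_alg) \<Rightarrow> ('z \<Rightarrow> 'az) \<Rightarrow> ('z \<Rightarrow> complex) \<Rightarrow> bool" where
  "haar_measure tAZ al mu \<longleftrightarrow> clinear mu \<and> mu 1 = 1 \<and>
     (\<forall>h. lin_ext tAZ (\<lambda>a z. cscale (mu z) a) h \<longrightarrow> (\<forall>z. h (al z) = cscale (mu z) 1))"

definition positive_functional :: "('z::cstar_alg \<Rightarrow> complex) \<Rightarrow> bool" where
  "positive_functional mu \<longleftrightarrow> (\<forall>z. 0 \<le> mu (cstar z * z))"

definition faithful_functional :: "('z::cstar_alg \<Rightarrow> complex) \<Rightarrow> bool" where
  "faithful_functional mu \<longleftrightarrow> (\<forall>z. z \<noteq> 0 \<longrightarrow> 0 < mu (cstar z * z))"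

end

theory Submission
  imports Defs
begin

text \<open>If \<open>\<mu>(y\<^sup>* y) = 0\<close>, the Cauchy-Schwarz inequality for the positive form
  \<open>(x, y) \<mapsto> \<mu>(x\<^sup>* y)\<close> gives \<open>\<mu>(p y) = 0\<close> for all \<open>p\<close>, so \<open>y\<close> lies in the left
  null space \<open>N\<close> of \<open>\<mu>\<close>. Invariance of \<open>\<mu>\<close> says that the slice map
  \<open>K(w) = (id \<otimes> \<mu>)((1 \<otimes> w) \<alpha>(y))\<close>, with \<open>\<alpha>(y) = \<Sum> b\<^sub>k \<otimes> z\<^sub>k\<close>, satisfies
  \<open>m (id \<otimes> K) \<alpha> = 0\<close>; composing with the antipode and the counit this forces \<open>K = 0\<close>,
  i.e. every \<open>z\<^sub>k\<close> lies in \<open>N\<close> when the \<open>b\<^sub>k\<close> are independent. Finally the Galois map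
  \<open>\<beta>(p \<otimes> q) = \<alpha>(p)(1 \<otimes> q)\<close> sends \<open>y \<otimes> 1\<close> to \<open>\<alpha>(y)\<close>, and \<open>\<beta>\<^sup>-\<^sup>1(b \<otimes> z)\<close> has the form
  \<open>\<Sum> u\<^sub>i \<otimes> v\<^sub>i z\<close>, which \<open>id \<otimes> \<mu>\<close> kills for \<open>z \<in> N\<close>; hence \<open>y = (id \<otimes> \<mu>)(y \<otimes> 1) = 0\<close>.\<close>

section \<open>Linear algebra over \<open>cvec\<close>\<close>

lemma cscale_zero_right [simp]: "cscale a (0::'a::cvec) = 0"
proof -
  have "cscale a (0::'a) = cscale a 0 + cscale a 0"
    by (metis add.right_neutral cscale_add_right)
  then show ?thesis by simp
qed

lemma cscale_zero_left [simp]: "cscale 0 (x::'a::cvec) = 0"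
proof -
  have "cscale 0 x = cscale 0 x + cscale 0 x"
    by (metis add.right_neutral cscale_add_left)
  then show ?thesis by simp
qed

lemma cscale_minus_left: "cscale (- a) (x::'a::cvec) = - cscale a x"
  by (metis add.inverse_unique cscale_add_left cscale_zero_left add.right_inverse)

lemma cscale_minus_right: "cscale a (- x::'a::cvec) = - cscale a x"
  by (metis add.inverse_unique cscale_add_right cscale_zero_right add.right_inverse)

lemma cscale_sum_right: "cscale a (\<Sum>i\<in>I. f i) = (\<Sum>i\<in>I. cscale a (f i::'a::cvec))"
  by (induction I rule: infinite_finite_induct) (auto simp: cscale_add_right)

lemma clinear_add: "clinear f \<Longrightarrow> f (x + y) = f x + f y"
  by (simp add: clinear_def)

lemma clinear_cscale: "clinear f \<Longrightarrow> f (cscale c x) = cscale c (f x)"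
  by (simp add: clinear_def)

lemma clinear_zero: "clinear f \<Longrightarrow> f 0 = 0"
  by (metis cscale_zero_left clinear_cscale)

lemma clinear_minus: "clinear f \<Longrightarrow> f (- x) = - f x"
  by (metis add.inverse_unique add.right_inverse clinear_add clinear_zero)

lemma clinear_sum: "clinear f \<Longrightarrow> f (\<Sum>i\<in>I. g i) = (\<Sum>i\<in>I. f (g i))"
  by (induction I rule: infinite_finite_induct) (auto simp: clinear_zero clinear_add)

lemma clinear_id: "clinear (\<lambda>x. x)"
  by (simp add: clinear_def)

lemma clinear_compose: "clinear f \<Longrightarrow> clinear g \<Longrightarrow> clinear (\<lambda>x. f (g x))"
  by (simp add: clinear_def)

lemma clinear_zero_map: "clinear (\<lambda>x. 0::'b::cvec)"
  by (simp add: clinear_def)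

lemma clinear_sum_fun: "(\<And>i. clinear (g i)) \<Longrightarrow> clinear (\<lambda>x. \<Sum>i\<in>I. g i x)"
  by (simp add: clinear_def sum.distrib cscale_sum_right)

lemma clinear_cscale_fun: "clinear g \<Longrightarrow> clinear (\<lambda>x. cscale (g x) (v::'b::cvec))"
  by (simp add: clinear_def cscale_add_left cscale_cscale cscale_complex_def)

lemma clinear_mult_left: "clinear (\<lambda>x::'a::calg. w * x)"
  by (simp add: clinear_def distrib_left cscale_mult_right)

lemma clinear_mult_right: "clinear (\<lambda>x::'a::calg. x * w)"
  by (simp add: clinear_def distrib_right cscale_mult_left)

lemma cindepD: "cindep n v \<Longrightarrow> (\<Sum>i<n. cscale (c i) (v i)) = 0 \<Longrightarrow> i < n \<Longrightarrow> c i = 0"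
  by (simp add: cindep_def)

lemma cindep_extend:
  assumes indep: "cindep m b" and not_span: "\<nexists>d. v = (\<Sum>j<m. cscale (d j) (b j))"
  shows "cindep (Suc m) (b(m := v))"
  unfolding cindep_def
proof (intro allI impI)
  fix c :: "nat \<Rightarrow> complex" and i
  assume "(\<Sum>j<Suc m. cscale (c j) ((b(m := v)) j)) = 0" and i: "i < Suc m"
  then have rel: "(\<Sum>j<m. cscale (c j) (b j)) + cscale (c m) v = 0"
    by simp
  have cm: "c m = 0"
  proof (rule ccontr)
    assume "c m \<noteq> 0"
    have "cscale (c m) v = - (\<Sum>j<m. cscale (c j) (b j))"
      using rel by (simp add: add.commute add_eq_0_iff)
    then have "cscale (inverse (c m)) (cscale (c m) v)
        = cscale (inverse (c m)) (- (\<Sum>j<m. cscale (c j) (b j)))"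
      by simp
    then have "v = (\<Sum>j<m. cscale (- inverse (c m) * c j) (b j))"
      using \<open>c m \<noteq> 0\<close> by (simp add: cscale_cscale cscale_one cscale_minus_right
          cscale_minus_left cscale_sum_right sum_negf)
    with not_span show False
      by (metis (no_types))
  qed
  with rel indep have "\<forall>j<m. c j = 0"
    by (simp add: cindep_def)
  with cm i show "c i = 0"
    by (auto simp: less_Suc_eq)
qed

lemma exists_cindep_spanning:
  fixes y :: "nat \<Rightarrow> 'a::cvec"
  shows "\<exists>m b c. cindep m b \<and> (\<forall>i<n. y i = (\<Sum>j<m. cscale (c i j) (b j)))"
proof (induction n)
  case 0
  show ?case
    by (rule exI[of _ 0]) (simp add: cindep_def)
next
  case (Suc n)
  then obtain m b c where indep: "cindep m b"
    and rep: "\<forall>i<n. y i = (\<Sum>j<m. cscale (c i j) (b j))"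
    by blast
  show ?case
  proof (cases "\<exists>d. y n = (\<Sum>j<m. cscale (d j) (b j))")
    case True
    then obtain d where "y n = (\<Sum>j<m. cscale (d j) (b j))"
      by blast
    with indep rep show ?thesis
      by (intro exI[of _ m] exI[of _ b] exI[of _ "\<lambda>i. if i = n then d else c i"])
        (auto simp: less_Suc_eq)
  next
    case False
    define c' where
      "c' i j = (if j = m then (if i = n then 1 else 0) else if i = n then 0 else c i j)" for i j
    have "\<forall>i<Suc n. y i = (\<Sum>j<Suc m. cscale (c' i j) ((b(m := y n)) j))"
      using rep by (auto simp: c'_def cscale_one less_Suc_eq)
    with cindep_extend[OF indep False] show ?thesis
      by blast
  qed
qed

section \<open>Tensor products and induced linear maps\<close>

definition bilin :: "('a::cvec \<Rightarrow> 'b::cvec \<Rightarrow> 'c::cvec) \<Rightarrow> bool" where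
  "bilin f \<longleftrightarrow> (\<forall>y. clinear (\<lambda>x. f x y)) \<and> (\<forall>x. clinear (f x))"

lemma tensor_bilin: "is_tensor t \<Longrightarrow> bilin t"
  by (simp add: is_tensor_def bilin_def)

lemma bilin_sum_left: "bilin f \<Longrightarrow> f (\<Sum>i\<in>I. g i) y = (\<Sum>i\<in>I. f (g i) y)"
  unfolding bilin_def using clinear_sum[of "\<lambda>x. f x y"] by blast

lemma bilin_sum_right: "bilin f \<Longrightarrow> f x (\<Sum>i\<in>I. g i) = (\<Sum>i\<in>I. f x (g i))"
  unfolding bilin_def using clinear_sum[of "f x"] by blast

lemma bilin_cscale_left: "bilin f \<Longrightarrow> f (cscale c x) y = cscale c (f x y)"
  unfolding bilin_def using clinear_cscale[of "\<lambda>x. f x y"] by blast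

lemma bilin_cscale_right: "bilin f \<Longrightarrow> f x (cscale c y) = cscale c (f x y)"
  unfolding bilin_def using clinear_cscale[of "f x"] by blast

lemma bilin_zero_left: "bilin f \<Longrightarrow> f 0 y = 0"
  unfolding bilin_def using clinear_zero[of "\<lambda>x. f x y"] by blast

lemma bilin_minus_left: "bilin f \<Longrightarrow> f (- x) y = - f x y"
  unfolding bilin_def using clinear_minus[of "\<lambda>x. f x y"] by blast

lemma bilin_compose_left: "bilin f \<Longrightarrow> clinear g \<Longrightarrow> bilin (\<lambda>x y. f (g x) y)"
  by (simp add: bilin_def clinear_def)

lemma bilin_compose_right: "bilin f \<Longrightarrow> clinear g \<Longrightarrow> bilin (\<lambda>x y. f x (g y))"
  by (simp add: bilin_def clinear_def)

lemma bilin_cscale_by_left: "clinear g \<Longrightarrow> bilin (\<lambda>x y. cscale (g x) (y::'b::cvec))"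
  by (simp add: bilin_def clinear_def cscale_add_left cscale_add_right cscale_cscale cscale_complex_def mult.commute)

lemma bilin_cscale_by_right: "clinear g \<Longrightarrow> bilin (\<lambda>x y. cscale (g y) (x::'b::cvec))"
  by (simp add: bilin_def clinear_def cscale_add_left cscale_add_right cscale_cscale cscale_complex_def mult.commute)

lemma bilin_mult: "clinear g \<Longrightarrow> clinear k \<Longrightarrow> bilin (\<lambda>x y. g x * (k y :: 'a::calg))"
  by (simp add: bilin_def clinear_def distrib_left distrib_right cscale_mult_left cscale_mult_right)

lemma tensor_span: "is_tensor t \<Longrightarrow> \<exists>n x y. w = (\<Sum>i<(n::nat). t (x i) (y i))"
  unfolding is_tensor_def by blast

lemma tensor_cindep_right:
  fixes n :: nat
  shows "is_tensor t \<Longrightarrow> cindep n y \<Longrightarrow> (\<Sum>i<n. t (x i) (y i)) = 0 \<Longrightarrow> \<forall>i<n. x i = 0"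
  unfolding is_tensor_def by blast

lemma bilin_sum_rebase_right:
  fixes n m :: nat
  assumes f: "bilin f" and rep: "\<forall>i<n. y i = (\<Sum>j<m. cscale (c i j) (b j))"
  shows "(\<Sum>i<n. f (x i) (y i)) = (\<Sum>j<m. f (\<Sum>i<n. cscale (c i j) (x i)) (b j))"
proof -
  have "(\<Sum>i<n. f (x i) (y i)) = (\<Sum>i<n. \<Sum>j<m. cscale (c i j) (f (x i) (b j)))"
    using rep by (simp add: bilin_sum_right[OF f] bilin_cscale_right[OF f])
  also have "\<dots> = (\<Sum>j<m. \<Sum>i<n. cscale (c i j) (f (x i) (b j)))"
    by (rule sum.swap)
  also have "\<dots> = (\<Sum>j<m. f (\<Sum>i<n. cscale (c i j) (x i)) (b j))"
    by (simp add: bilin_sum_left[OF f] bilin_cscale_left[OF f])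
  finally show ?thesis .
qed

lemma bilin_sum_rebase_left:
  fixes n m :: nat
  assumes f: "bilin f" and rep: "\<forall>i<n. x i = (\<Sum>j<m. cscale (c i j) (b j))"
  shows "(\<Sum>i<n. f (x i) (y i)) = (\<Sum>j<m. f (b j) (\<Sum>i<n. cscale (c i j) (y i)))"
proof -
  have "(\<Sum>i<n. f (x i) (y i)) = (\<Sum>i<n. \<Sum>j<m. cscale (c i j) (f (b j) (y i)))"
    using rep by (simp add: bilin_sum_left[OF f] bilin_cscale_left[OF f])
  also have "\<dots> = (\<Sum>j<m. \<Sum>i<n. cscale (c i j) (f (b j) (y i)))"
    by (rule sum.swap)
  also have "\<dots> = (\<Sum>j<m. f (b j) (\<Sum>i<n. cscale (c i j) (y i)))"
    by (simp add: bilin_sum_right[OF f] bilin_cscale_right[OF f])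
  finally show ?thesis .
qed

lemma tensor_exists_cindep_left:
  assumes t: "is_tensor t"
  shows "\<exists>(m::nat) b z. cindep m b \<and> w = (\<Sum>j<m. t (b j) (z j))"
proof -
  obtain n :: nat and x y where w: "w = (\<Sum>i<n. t (x i) (y i))"
    using tensor_span[OF t] by blast
  obtain m b c where "cindep m b" and rep: "\<forall>i<n. x i = (\<Sum>j<m. cscale (c i j) (b j))"
    using exists_cindep_spanning by blast
  with w show ?thesis
    using bilin_sum_rebase_left[OF tensor_bilin[OF t] rep, of y]
    by (intro exI[of _ m] exI[of _ b] exI[of _ "\<lambda>j. \<Sum>i<n. cscale (c i j) (y i)"]) simp
qed

lemma tensor_sum_eq_zero_bilin:
  fixes n :: nat
  assumes t: "is_tensor t" and f: "bilin f" and zero: "(\<Sum>i<n. t (x i) (y i)) = 0"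
  shows "(\<Sum>i<n. f (x i) (y i)) = 0"
proof -
  obtain m b c where indep: "cindep m b" and rep: "\<forall>i<n. y i = (\<Sum>j<m. cscale (c i j) (b j))"
    using exists_cindep_spanning by blast
  have "(\<Sum>j<m. t (\<Sum>i<n. cscale (c i j) (x i)) (b j)) = 0"
    using zero bilin_sum_rebase_right[OF tensor_bilin[OF t] rep, of x] by simp
  then have "\<forall>j<m. (\<Sum>i<n. cscale (c i j) (x i)) = 0"
    by (rule tensor_cindep_right[OF t indep])
  then show ?thesis
    by (simp add: bilin_sum_rebase_right[OF f rep] bilin_zero_left[OF f])
qed

definition seq_append :: "nat \<Rightarrow> (nat \<Rightarrow> 'a) \<Rightarrow> (nat \<Rightarrow> 'a) \<Rightarrow> nat \<Rightarrow> 'a" where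
  "seq_append n x x' i = (if i < n then x i else x' (i - n))"

lemma sum_seq_append:
  "(\<Sum>i<n + n'. F (seq_append n x x' i) (seq_append n y y' i))
    = (\<Sum>i<n. F (x i) (y i)) + (\<Sum>i<n'. F (x' i) (y' i))"
proof -
  have split: "(\<Sum>i<n + n'. G i) = (\<Sum>i<n. G i) + (\<Sum>i<n'. G (n + i))"
    for G :: "nat \<Rightarrow> 'g::comm_monoid_add"
    by (induction n') (auto simp: add.assoc)
  show ?thesis
    by (simp add: split seq_append_def)
qed

lemma tensor_sum_eq_bilin:
  fixes n n' :: nat
  assumes t: "is_tensor t" and f: "bilin f"
    and eq: "(\<Sum>i<n. t (x i) (y i)) = (\<Sum>i<n'. t (x' i) (y' i))"
  shows "(\<Sum>i<n. f (x i) (y i)) = (\<Sum>i<n'. f (x' i) (y' i))"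
proof -
  have "(\<Sum>i<n + n'. t (seq_append n x (\<lambda>i. - x' i) i) (seq_append n y y' i)) = 0"
    using eq by (simp add: sum_seq_append bilin_minus_left[OF tensor_bilin[OF t]] sum_negf)
  then have "(\<Sum>i<n + n'. f (seq_append n x (\<lambda>i. - x' i) i) (seq_append n y y' i)) = 0"
    by (rule tensor_sum_eq_zero_bilin[OF t f])
  then show ?thesis
    by (simp add: sum_seq_append bilin_minus_left[OF f] sum_negf)
qed

lemma lin_ext_exists:
  fixes t :: "'a::cvec \<Rightarrow> 'b::cvec \<Rightarrow> 'c::cvec" and f :: "'a \<Rightarrow> 'b \<Rightarrow> 'd::cvec"
  assumes t: "is_tensor t" and f: "bilin f"
  shows "\<exists>h. lin_ext t f h"
proof -
  define h where
    "h w = (SOME v. \<exists>(n::nat) x y. w = (\<Sum>i<n. t (x i) (y i)) \<and> v = (\<Sum>i<n. f (x i) (y i)))"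
    for w
  have h_sum: "h (\<Sum>i<n. t (x i) (y i)) = (\<Sum>i<n. f (x i) (y i))" for n :: nat and x y
  proof -
    let ?w = "\<Sum>i<n. t (x i) (y i)"
    have "\<exists>v. \<exists>(n'::nat) x' y'. ?w = (\<Sum>i<n'. t (x' i) (y' i)) \<and> v = (\<Sum>i<n'. f (x' i) (y' i))"
      by blast
    then have "\<exists>(n'::nat) x' y'. ?w = (\<Sum>i<n'. t (x' i) (y' i)) \<and> h ?w = (\<Sum>i<n'. f (x' i) (y' i))"
      unfolding h_def by (rule someI_ex)
    then obtain n' :: nat and x' y' where eq: "?w = (\<Sum>i<n'. t (x' i) (y' i))"
      and h: "h ?w = (\<Sum>i<n'. f (x' i) (y' i))"
      by blast
    show ?thesis
      unfolding h by (rule tensor_sum_eq_bilin[OF t f eq, symmetric])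
  qed
  have "clinear h"
    unfolding clinear_def
  proof (intro conjI allI)
    fix w w'
    obtain n :: nat and x y where w: "w = (\<Sum>i<n. t (x i) (y i))"
      using tensor_span[OF t] by blast
    obtain n' :: nat and x' y' where w': "w' = (\<Sum>i<n'. t (x' i) (y' i))"
      using tensor_span[OF t] by blast
    have "w + w' = (\<Sum>i<n + n'. t (seq_append n x x' i) (seq_append n y y' i))"
      by (simp add: w w' sum_seq_append)
    then have "h (w + w') = (\<Sum>i<n + n'. f (seq_append n x x' i) (seq_append n y y' i))"
      by (simp only: h_sum)
    then show "h (w + w') = h w + h w'"
      by (simp add: w w' h_sum sum_seq_append)
  next
    fix c w
    obtain n :: nat and x y where w: "w = (\<Sum>i<n. t (x i) (y i))"
      using tensor_span[OF t] by blast
    have "cscale c w = (\<Sum>i<n. t (cscale c (x i)) (y i))"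
      by (simp add: w cscale_sum_right bilin_cscale_left[OF tensor_bilin[OF t]])
    then show "h (cscale c w) = cscale c (h w)"
      by (simp add: w h_sum cscale_sum_right bilin_cscale_left[OF f])
  qed
  moreover have "h (t x y) = f x y" for x y
    using h_sum[where n = 1 and x = "\<lambda>_. x" and y = "\<lambda>_. y"] by simp
  ultimately show ?thesis
    unfolding lin_ext_def by blast
qed

lemma lin_ext_clinear: "lin_ext t f h \<Longrightarrow> clinear h"
  by (simp add: lin_ext_def)

lemma lin_ext_apply: "lin_ext t f h \<Longrightarrow> h (t x y) = f x y"
  by (simp add: lin_ext_def)

lemma lin_ext_sum: "lin_ext t f h \<Longrightarrow> h (\<Sum>i\<in>I. t (x i) (y i)) = (\<Sum>i\<in>I. f (x i) (y i))"
  by (simp add: clinear_sum lin_ext_clinear lin_ext_apply)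

lemma tensor_clinear_eqI:
  assumes t: "is_tensor t" and "clinear h" and "clinear h'" and "\<And>x y. h (t x y) = h' (t x y)"
  shows "h w = h' w"
proof -
  obtain n :: nat and x y where "w = (\<Sum>i<n. t (x i) (y i))"
    using tensor_span[OF t] by blast
  then show ?thesis
    by (simp add: clinear_sum assms(2-4))
qed

lemma lin_ext_clinear_param:
  assumes t: "is_tensor t" and M: "\<And>a. lin_ext t (f a) (M a)" and f: "\<And>x y. clinear (\<lambda>a. f a x y)"
  shows "clinear (\<lambda>a. M a w)"
proof -
  obtain n :: nat and x y where "w = (\<Sum>i<n. t (x i) (y i))"
    using tensor_span[OF t] by blast
  then have "(\<lambda>a. M a w) = (\<lambda>a. \<Sum>i<n. f a (x i) (y i))"
    by (simp add: lin_ext_sum[OF M])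
  then show ?thesis
    by (simp add: clinear_sum_fun f)
qed

section \<open>Coactions of Hopf algebras\<close>

definition left_comodule ::
  "('a::cvec \<Rightarrow> 'a \<Rightarrow> 'aa::cvec) \<Rightarrow> ('a \<Rightarrow> 'aa) \<Rightarrow> ('a \<Rightarrow> complex) \<Rightarrow>
   ('a \<Rightarrow> 'z::cvec \<Rightarrow> 'az::cvec) \<Rightarrow> ('aa \<Rightarrow> 'z \<Rightarrow> 'aaz::cvec) \<Rightarrow> ('z \<Rightarrow> 'az) \<Rightarrow> bool" where
  "left_comodule tAA D e tAZ tAAZ al \<longleftrightarrow>
     is_tensor tAZ \<and> is_tensor tAAZ \<and> clinear al \<and>
     (\<forall>D1 D2 M. lin_ext tAZ (\<lambda>a z. tAAZ (D a) z) D1 \<and>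
                (\<forall>a. lin_ext tAZ (\<lambda>b w. tAAZ (tAA a b) w) (M a)) \<and>
                lin_ext tAZ (\<lambda>a z. M a (al z)) D2
                \<longrightarrow> (\<forall>z. D1 (al z) = D2 (al z))) \<and>
     (\<forall>h. lin_ext tAZ (\<lambda>a z. cscale (e a) z) h \<longrightarrow> (\<forall>z. h (al z) = z))"

lemma galois_ext_left_comodule:
  "galois_ext tAA D e tAZ tAAZ tZZ al \<Longrightarrow> left_comodule tAA D e tAZ tAAZ al"
  by (simp add: galois_ext_def left_comodule_def tensor_algebra_def star_hom_def)

lemma left_comodule_counit:
  assumes "left_comodule tAA D e tAZ tAAZ al" and "lin_ext tAZ (\<lambda>a z. cscale (e a) z) h"
  shows "h (al z) = z"
  using assms unfolding left_comodule_def by blast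

lemma left_comodule_coassoc_maps:
  assumes comod: "left_comodule tAA D e tAZ tAAZ al" and tAA: "bilin tAA" and D: "clinear D"
  obtains D1 M D2 where "lin_ext tAZ (\<lambda>a z. tAAZ (D a) z) D1"
    and "\<And>a. lin_ext tAZ (\<lambda>b w. tAAZ (tAA a b) w) (M a)"
    and "lin_ext tAZ (\<lambda>a z. M a (al z)) D2" and "\<And>z. D1 (al z) = D2 (al z)"
proof -
  have tAZ: "is_tensor tAZ" and tAAZ: "bilin tAAZ" and al: "clinear al"
    using comod unfolding left_comodule_def by (auto intro: tensor_bilin)
  obtain D1 where D1: "lin_ext tAZ (\<lambda>a z. tAAZ (D a) z) D1"
    using lin_ext_exists[OF tAZ bilin_compose_left[OF tAAZ D]] by blast
  have "\<forall>a. \<exists>Ma. lin_ext tAZ (\<lambda>b w. tAAZ (tAA a b) w) Ma"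
    using tAA lin_ext_exists[OF tAZ bilin_compose_left[OF tAAZ]] unfolding bilin_def by blast
  from choice[OF this] obtain M where M: "\<And>a. lin_ext tAZ (\<lambda>b w. tAAZ (tAA a b) w) (M a)"
    by blast
  have "bilin (\<lambda>a z. M a (al z))"
    unfolding bilin_def
  proof (intro conjI allI)
    fix z
    have "clinear (\<lambda>a. tAAZ (tAA a x) y)" for x y
      using tAA tAAZ unfolding bilin_def
      by (metis (no_types) clinear_compose[of "\<lambda>u. tAAZ u y" "\<lambda>a. tAA a x"])
    then show "clinear (\<lambda>a. M a (al z))"
      by (rule lin_ext_clinear_param[OF tAZ M])
  next
    fix a
    show "clinear (\<lambda>z. M a (al z))"
      by (rule clinear_compose[OF lin_ext_clinear[OF M] al])
  qed
  then obtain D2 where D2: "lin_ext tAZ (\<lambda>a z. M a (al z)) D2"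
    using lin_ext_exists[OF tAZ] by blast
  have "D1 (al z) = D2 (al z)" for z
    using comod D1 M D2 unfolding left_comodule_def by blast
  with D1 M D2 show ?thesis
    using that by blast
qed

text \<open>Coassociativity \<open>(\<Delta> \<otimes> id) \<alpha> = (id \<otimes> \<alpha>) \<alpha>\<close>, tested against an arbitrary bilinear
  map \<open>g\<close> on \<open>A \<otimes> A\<close> times \<open>Z\<close>.\<close>

lemma left_comodule_coassoc_bilin:
  assumes comod: "left_comodule tAA D e tAZ tAAZ al" and tAA: "bilin tAA" and D: "clinear D"
    and g: "bilin g"
    and G1: "lin_ext tAZ (\<lambda>a z. g (D a) z) G1"
    and G: "\<And>a. lin_ext tAZ (\<lambda>b z. g (tAA a b) z) (G a)"
    and G2: "lin_ext tAZ (\<lambda>a z. G a (al z)) G2"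
  shows "G1 (al z) = G2 (al z)"
proof -
  have tAZ: "is_tensor tAZ" and tAAZ: "is_tensor tAAZ"
    using comod unfolding left_comodule_def by blast+
  obtain D1 M D2 where D1: "lin_ext tAZ (\<lambda>a z. tAAZ (D a) z) D1"
    and M: "\<And>a. lin_ext tAZ (\<lambda>b w. tAAZ (tAA a b) w) (M a)"
    and D2: "lin_ext tAZ (\<lambda>a z. M a (al z)) D2" and coassoc: "\<And>z. D1 (al z) = D2 (al z)"
    using left_comodule_coassoc_maps[OF comod tAA D] by blast
  obtain Om where Om: "lin_ext tAAZ g Om"
    using lin_ext_exists[OF tAAZ g] by blast
  have Om_clinear: "clinear Om"
    by (rule lin_ext_clinear[OF Om])
  have G1_eq: "G1 v = Om (D1 v)" for v
    by (rule tensor_clinear_eqI[OF tAZ lin_ext_clinear[OF G1]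
          clinear_compose[OF Om_clinear lin_ext_clinear[OF D1]]])
      (simp add: lin_ext_apply[OF G1] lin_ext_apply[OF D1] lin_ext_apply[OF Om])
  have G_eq: "G a v = Om (M a v)" for a v
    by (rule tensor_clinear_eqI[OF tAZ lin_ext_clinear[OF G]
          clinear_compose[OF Om_clinear lin_ext_clinear[OF M]]])
      (simp add: lin_ext_apply[OF G] lin_ext_apply[OF M] lin_ext_apply[OF Om])
  have G2_eq: "G2 v = Om (D2 v)" for v
    by (rule tensor_clinear_eqI[OF tAZ lin_ext_clinear[OF G2]
          clinear_compose[OF Om_clinear lin_ext_clinear[OF D2]]])
      (simp add: lin_ext_apply[OF G2] lin_ext_apply[OF D2] G_eq)
  show ?thesis
    by (simp add: G1_eq G2_eq coassoc)
qed

text \<open>With \<open>K\<^sub>t(a \<otimes> z) = a K(z)\<close>, the antipode and counit axioms give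
  \<open>K = m (S \<otimes> K\<^sub>t) (id \<otimes> \<alpha>) \<alpha>\<close>.\<close>

lemma coaction_slice_zero_imp_zero:
  fixes K :: "'z::cvec \<Rightarrow> 'a::cstar_alg"
  assumes hopf: "hopf_star_algebra tAA tAAA D e S"
    and comod: "left_comodule tAA D e tAZ tAAZ al"
    and K: "clinear K" and Kt: "lin_ext tAZ (\<lambda>a z. a * K z) Kt"
    and Kt_al: "\<And>z. Kt (al z) = 0"
  shows "K z = 0"
proof -
  have tAA: "is_tensor tAA" and D: "clinear D" and e: "clinear e" and S: "clinear S"
    and antipode: "\<And>h. lin_ext tAA (\<lambda>x y. S x * y) h \<Longrightarrow> \<forall>a. h (D a) = cscale (e a) 1"
    using hopf unfolding hopf_star_algebra_def tensor_algebra_def star_hom_def by blast+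
  have tAZ: "is_tensor tAZ"
    using comod unfolding left_comodule_def by blast
  obtain H where H: "lin_ext tAA (\<lambda>x y. S x * y) H"
    using lin_ext_exists[OF tAA bilin_mult[OF S clinear_id]] by blast
  define g where "g P w = H P * K w" for P w
  have g: "bilin g"
    unfolding g_def by (rule bilin_mult[OF lin_ext_clinear[OF H] K])
  obtain G1 where G1: "lin_ext tAZ (\<lambda>a z. g (D a) z) G1"
    using lin_ext_exists[OF tAZ bilin_compose_left[OF g D]] by blast
  have G: "lin_ext tAZ (\<lambda>b z. g (tAA a b) z) (\<lambda>v. S a * Kt v)" for a
    unfolding lin_ext_def g_def
    by (simp add: clinear_compose[OF clinear_mult_left lin_ext_clinear[OF Kt]]
        lin_ext_apply[OF Kt] lin_ext_apply[OF H] mult.assoc)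
  have G2: "lin_ext tAZ (\<lambda>a z. S a * Kt (al z)) (\<lambda>_. 0)"
    by (simp add: lin_ext_def Kt_al clinear_zero_map)
  obtain h where h: "lin_ext tAZ (\<lambda>a z. cscale (e a) z) h"
    using lin_ext_exists[OF tAZ bilin_cscale_by_left[OF e]] by blast
  have "G1 v = K (h v)" for v
    by (rule tensor_clinear_eqI[OF tAZ lin_ext_clinear[OF G1]
          clinear_compose[OF K lin_ext_clinear[OF h]]])
      (simp add: lin_ext_apply[OF G1] lin_ext_apply[OF h] g_def antipode[OF H]
        cscale_mult_left clinear_cscale[OF K])
  then have "K z = G1 (al z)"
    by (simp add: left_comodule_counit[OF comod h])
  also have "\<dots> = 0"
    using left_comodule_coassoc_bilin[OF comod tensor_bilin[OF tAA] D g G1 G G2] .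
  finally show ?thesis .
qed

section \<open>The null space of an invariant functional\<close>

lemma nonneg_quadratic_imp_cross_coeff_zero:
  fixes \<alpha> \<beta> \<gamma> :: complex
  assumes nonneg: "\<And>s. 0 \<le> cnj s * s * \<alpha> + cnj s * \<beta> + s * \<gamma>"
  shows "\<beta> = 0"
proof -
  have "0 \<le> \<alpha> + \<beta> + \<gamma>" and "0 \<le> \<alpha> - \<beta> - \<gamma>" and "0 \<le> \<alpha> - \<i> * \<beta> + \<i> * \<gamma>"
    using nonneg[of 1] nonneg[of "-1"] nonneg[of \<i>] by simp_all
  then have \<alpha>: "Im \<alpha> = 0" "Re \<alpha> \<ge> 0" and \<gamma>: "Im \<gamma> = - Im \<beta>" "Re \<gamma> = Re \<beta>"
    by (auto simp: less_eq_complex_def)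
  define N where "N = (Re \<beta>)\<^sup>2 + (Im \<beta>)\<^sup>2"
  define r where "r = 1 / (Re \<alpha> + 1)"
  have r: "r > 0" "r * Re \<alpha> \<le> 1"
    using \<alpha> by (simp_all add: r_def field_simps)
  \<comment> \<open>\<open>s = -r\<beta>\<close> gives \<open>0 \<le> r (r Re \<alpha> - 2) |\<beta>|\<^sup>2\<close> with \<open>r Re \<alpha> - 2 < 0\<close>.\<close>
  have "0 \<le> r * r * N * Re \<alpha> - 2 * r * N"
    using nonneg[of "- complex_of_real r * \<beta>"] \<alpha> \<gamma>
    by (simp add: less_eq_complex_def N_def algebra_simps power2_eq_square)
  then have "0 \<le> r * (r * Re \<alpha> - 2) * N"
    by (simp add: algebra_simps)
  moreover have "r * (r * Re \<alpha> - 2) < 0"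
    using r by (simp add: mult_pos_neg)
  moreover have "N \<ge> 0"
    by (simp add: N_def)
  ultimately have "N = 0"
    by (metis antisym mult_nonpos_nonneg less_imp_le zero_le_mult_iff not_le)
  then show ?thesis
    by (simp add: N_def complex_eq_iff sum_power2_eq_zero_iff)
qed

lemma positive_functional_left_null:
  fixes mu :: "'z::cstar_alg \<Rightarrow> complex"
  assumes pos: "positive_functional mu" and mu: "clinear mu" and null: "mu (cstar y * y) = 0"
  shows "mu (p * y) = 0"
proof -
  define x where "x = cstar p"
  have "0 \<le> cnj s * s * mu (cstar x * x) + cnj s * mu (cstar x * y) + s * mu (cstar y * x)" for s
  proof -
    have "cstar (cscale s x + y) * (cscale s x + y) =
        cscale (cnj s * s) (cstar x * x) + cscale (cnj s) (cstar x * y)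
          + cscale s (cstar y * x) + cstar y * y"
      by (simp add: cstar_add cstar_cscale distrib_left distrib_right cscale_mult_left
          cscale_mult_right cscale_cscale cscale_add_right algebra_simps)
    then have "mu (cstar (cscale s x + y) * (cscale s x + y)) =
        cnj s * s * mu (cstar x * x) + cnj s * mu (cstar x * y) + s * mu (cstar y * x)"
      using null by (simp add: clinear_add[OF mu] clinear_cscale[OF mu] cscale_complex_def)
    then show ?thesis
      using pos unfolding positive_functional_def by metis
  qed
  then have "mu (cstar x * y) = 0"
    by (rule nonneg_quadratic_imp_cross_coeff_zero)
  then show ?thesis
    by (simp add: x_def cstar_cstar)
qed

text \<open>For the slice map \<open>K\<close>, \<open>K\<^sub>t(v) = (id \<otimes> \<mu>)(v \<alpha>(y))\<close>, which
  vanishes on \<open>\<alpha>(Z)\<close> by invariance of \<open>\<mu>\<close>.\<close>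

lemma coaction_coeffs_left_null:
  assumes hopf: "hopf_star_algebra tAA tAAA D e S"
    and comod: "left_comodule tAA D e tAZ tAAZ al" and tAZ_alg: "tensor_algebra tAZ"
    and al_mult: "\<And>x y. al (x * y) = al x * al y"
    and haar: "haar_measure tAZ al mu"
    and null: "\<And>p. mu (p * y) = 0"
    and indep: "cindep m b" and al_y: "al y = (\<Sum>k<m. tAZ (b k) (z k))" and "k < m"
  shows "mu (p * z k) = 0"
proof -
  have tAZ: "is_tensor tAZ"
    using comod unfolding left_comodule_def by blast
  have mu: "clinear mu"
    and invariant: "\<And>h. lin_ext tAZ (\<lambda>a z. cscale (mu z) a) h \<Longrightarrow> \<forall>z. h (al z) = cscale (mu z) 1"
    using haar unfolding haar_measure_def by blast+
  define K where "K w = (\<Sum>k<m. cscale (mu (w * z k)) (b k))" for w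
  have K: "clinear K"
    unfolding K_def
    by (intro clinear_sum_fun clinear_cscale_fun clinear_compose[OF mu clinear_mult_right])
  obtain Kt where Kt: "lin_ext tAZ (\<lambda>a w. a * K w) Kt"
    using lin_ext_exists[OF tAZ bilin_mult[OF clinear_id K]] by blast
  obtain h where h: "lin_ext tAZ (\<lambda>a z. cscale (mu z) a) h"
    using lin_ext_exists[OF tAZ bilin_cscale_by_right[OF mu]] by blast
  have tAZ_mult: "tAZ a w * tAZ a' w' = tAZ (a * a') (w * w')" for a w a' w'
    using tAZ_alg unfolding tensor_algebra_def by blast
  have "Kt v = h (v * al y)" for v
  proof (rule tensor_clinear_eqI[OF tAZ lin_ext_clinear[OF Kt]
        clinear_compose[OF lin_ext_clinear[OF h] clinear_mult_right]])
    fix a w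
    have "h (tAZ a w * al y) = (\<Sum>k<m. cscale (mu (w * z k)) (a * b k))"
      by (simp add: al_y sum_distrib_left tAZ_mult lin_ext_sum[OF h])
    then show "Kt (tAZ a w) = h (tAZ a w * al y)"
      by (simp add: lin_ext_apply[OF Kt] K_def sum_distrib_left cscale_mult_right)
  qed
  then have "Kt (al x) = 0" for x
    by (simp add: al_mult[symmetric] invariant[OF h, rule_format] null)
  then have "K p = 0"
    by (rule coaction_slice_zero_imp_zero[OF hopf comod K Kt])
  then show ?thesis
    unfolding K_def by (rule cindepD[OF indep _ \<open>k < m\<close>])
qed

section \<open>Galois extensions\<close>

lemma galois_ext_tensor_one_decomp:
  fixes m :: nat
  assumes galois: "galois_ext tAA D e tAZ tAAZ tZZ al"
    and al_y: "al y = (\<Sum>k<m. tAZ (b k) (z k))"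
  obtains rho P where "\<And>w. lin_ext tZZ (\<lambda>p q. tZZ p (q * w)) (rho w)"
    and "tZZ y 1 = (\<Sum>k<m. rho (z k) (P k))"
proof -
  have tAZ: "is_tensor tAZ" and tZZ: "is_tensor tZZ"
    using galois unfolding galois_ext_def tensor_algebra_def by blast+
  obtain beta R where R: "\<And>w. lin_ext tAZ (\<lambda>a z. tAZ a (z * w)) (R w)"
    and beta: "lin_ext tZZ (\<lambda>z w. R w (al z)) beta" and "bij beta"
    using galois unfolding galois_ext_def by blast
  have R_clinear: "clinear (R w)" for w
    using R lin_ext_clinear by blast
  have R_one: "R 1 v = v" for v
    by (rule tensor_clinear_eqI[OF tAZ R_clinear clinear_id]) (simp add: lin_ext_apply[OF R])
  have R_mult: "R w (R q v) = R (q * w) v" for w q v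
    by (rule tensor_clinear_eqI[OF tAZ clinear_compose[OF R_clinear R_clinear] R_clinear])
      (simp add: lin_ext_apply[OF R] mult.assoc)
  have "\<forall>w. \<exists>r. lin_ext tZZ (\<lambda>p q. tZZ p (q * w)) r"
    using lin_ext_exists[OF tZZ bilin_compose_right[OF tensor_bilin[OF tZZ] clinear_mult_right]]
    by blast
  from choice[OF this] obtain rho where rho: "\<And>w. lin_ext tZZ (\<lambda>p q. tZZ p (q * w)) (rho w)"
    by blast
  have beta_rho: "beta (rho w Q) = R w (beta Q)" for w Q
    by (rule tensor_clinear_eqI[OF tZZ
          clinear_compose[OF lin_ext_clinear[OF beta] lin_ext_clinear[OF rho]]
          clinear_compose[OF R_clinear lin_ext_clinear[OF beta]]])
      (simp add: lin_ext_apply[OF rho] lin_ext_apply[OF beta] R_mult)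
  define P where "P k = inv beta (tAZ (b k) 1)" for k
  have P: "beta (P k) = tAZ (b k) 1" for k
    using bij_is_surj[OF \<open>bij beta\<close>] by (simp add: P_def surj_f_inv_f)
  \<comment> \<open>Under the Galois map, \<open>y \<otimes> 1\<close> corresponds to \<open>\<alpha>(y) = \<Sum> (b\<^sub>k \<otimes> 1)(1 \<otimes> z\<^sub>k)\<close>.\<close>
  have "beta (tZZ y 1) = al y"
    by (simp add: lin_ext_apply[OF beta] R_one)
  also have "\<dots> = (\<Sum>k<m. R (z k) (beta (P k)))"
    by (simp add: al_y P lin_ext_apply[OF R])
  also have "\<dots> = beta (\<Sum>k<m. rho (z k) (P k))"
    by (simp add: beta_rho clinear_sum[OF lin_ext_clinear[OF beta]])
  finally have "tZZ y 1 = (\<Sum>k<m. rho (z k) (P k))"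
    by (rule injD[OF bij_is_inj[OF \<open>bij beta\<close>]])
  with rho show ?thesis
    using that by blast
qed

lemma galois_ext_coaction_left_null_imp_zero:
  fixes mu :: "'z::cstar_alg \<Rightarrow> complex" and m :: nat
  assumes galois: "galois_ext tAA D e tAZ tAAZ tZZ al"
    and mu: "clinear mu" "mu 1 = 1"
    and al_y: "al y = (\<Sum>k<m. tAZ (b k) (z k))"
    and null: "\<And>k p. k < m \<Longrightarrow> mu (p * z k) = 0"
  shows "y = 0"
proof -
  have tZZ: "is_tensor tZZ"
    using galois unfolding galois_ext_def by blast
  obtain rho P where rho: "\<And>w. lin_ext tZZ (\<lambda>p q. tZZ p (q * w)) (rho w)"
    and y1: "tZZ y 1 = (\<Sum>k<m. rho (z k) (P k))"
    using galois_ext_tensor_one_decomp[OF galois al_y] by blast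
  obtain Psi where Psi: "lin_ext tZZ (\<lambda>p q. cscale (mu q) p) Psi"
    using lin_ext_exists[OF tZZ bilin_cscale_by_right[OF mu(1)]] by blast
  have Psi_rho: "Psi (rho (z k) Q) = 0" if "k < m" for k Q
    by (rule tensor_clinear_eqI[OF tZZ
          clinear_compose[OF lin_ext_clinear[OF Psi] lin_ext_clinear[OF rho]] clinear_zero_map])
      (simp add: lin_ext_apply[OF rho] lin_ext_apply[OF Psi] null[OF that])
  have "y = Psi (tZZ y 1)"
    by (simp add: lin_ext_apply[OF Psi] mu(2) cscale_one)
  also have "\<dots> = 0"
    by (simp add: y1 clinear_sum[OF lin_ext_clinear[OF Psi]] Psi_rho)
  finally show ?thesis .
qed

theorem corollary4p3p5:
  fixes tAA :: "'a::cstar_alg \<Rightarrow> 'a \<Rightarrow> 'aa::cstar_alg"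
    and tAAA :: "'aa \<Rightarrow> 'a \<Rightarrow> 'aaa::cvec"
    and D :: "'a \<Rightarrow> 'aa" and e :: "'a \<Rightarrow> complex" and S :: "'a \<Rightarrow> 'a"
    and tAZ :: "'a \<Rightarrow> 'z::cstar_alg \<Rightarrow> 'az::cstar_alg"
    and tAAZ :: "'aa \<Rightarrow> 'z \<Rightarrow> 'aaz::cvec"
    and tZZ :: "'z \<Rightarrow> 'z \<Rightarrow> 'zz::cvec"
    and al :: "'z \<Rightarrow> 'az" and mu :: "'z \<Rightarrow> complex"
  assumes "hopf_star_algebra tAA tAAA D e S"
    and "unitarizable tAA D e"
    and "galois_ext tAA D e tAZ tAAZ tZZ al"
    and "haar_measure tAZ al mu"
    and "positive_functional mu"
  shows "faithful_functional mu"
  unfolding faithful_functional_def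
proof (intro allI impI)
  fix y :: 'z
  assume "y \<noteq> 0"
  have comod: "left_comodule tAA D e tAZ tAAZ al"
    using assms(3) by (rule galois_ext_left_comodule)
  have tAZ: "is_tensor tAZ" "tensor_algebra tAZ" and al_mult: "\<And>x y. al (x * y) = al x * al y"
    using assms(3) unfolding galois_ext_def tensor_algebra_def star_hom_def by blast+
  have mu: "clinear mu" "mu 1 = 1"
    using assms(4) unfolding haar_measure_def by blast+
  show "0 < mu (cstar y * y)"
  proof (rule ccontr)
    assume "\<not> 0 < mu (cstar y * y)"
    with assms(5) have "mu (cstar y * y) = 0"
      unfolding positive_functional_def by (metis order_le_less)
    then have null: "mu (p * y) = 0" for p
      by (rule positive_functional_left_null[OF assms(5) mu(1)])
    obtain m b z where indep: "cindep m b" and al_y: "al y = (\<Sum>k<m. tAZ (b k) (z k))"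
      using tensor_exists_cindep_left[OF tAZ(1)] by blast
    have "mu (p * z k) = 0" if "k < m" for k p
      by (rule coaction_coeffs_left_null[OF assms(1) comod tAZ(2) al_mult assms(4) null indep
            al_y that])
    then have "y = 0"
      by (rule galois_ext_coaction_left_null_imp_zero[OF assms(3) mu al_y])
    with \<open>y \<noteq> 0\<close> show False ..
  qed
qed

end
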